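(* Let $\varphi_1$ and $\varphi_2$ be two $\mathbb{T}$-gains on a connected graph $G$ with $n$ vertices and $m$ edges. Let $T$ be a normal spanning tree of $G$ such that $\varphi_1(\overrightarrow{C_j(T)})=\varphi_2(\overrightarrow{C_j(T)})$ for all $j=1,\dots,m-n+1$. Then $A(\Phi_1)$ and $A(\Phi_2)$ have the same spectrum, i.e. $\Phi_1=(G,\varphi_1)$ and $\Phi_2=(G,\varphi_2)$ are $\mathbb{T}$-cospectral.
   Context: Graphs are finite, simple and undirected, $V(G)=\{v_1,\dots,v_n\}$. $\mathbb{T}=\{z\in\mathbb{C}:|z|=1\}$. A $\mathbb{T}$-gain on $G$ is a map $\varphi$ from oriented edges to $\mathbb{T}$ with $\varphi(\overrightarrow{e_{ts}})=\varphi(\overrightarrow{e_{st}})^{-1}$; $\Phi=(G,\varphi)$ is a $\mathbb{T}$-gain graph, with adjacency matrix $A(\Phi)$ the $n\times n$ Hermitian matrix whose $(s,t)$ entry is $\varphi(\overrightarrow{e_{st}})$ if $v_s\sim v_t$ and $0$ otherwise. Two $\mathbb{T}$-gain graphs are $\mathbb{T}$-cospectral if their adjacency matrices have the same spectrum. The gain of a directed cycle is the product of gains of its oriented edges. A rooted spanning tree $T$ with root $v_r$ induces the tree order ($v_x\le v_y$ iff $v_x$ lies on the $T$-path from $v_r$ to $v_y$); $T$ is normal if adjacent vertices of $G$ are always comparable. The suitably oriented graph $\overrightarrow{G_T}$ orients each edge $e_{st}$ with $v_s\le v_t$ as $\overrightarrow{e_{st}}$ if $e_{st}\in E(T)$ and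 as $\overrightarrow{e_{ts}}$ otherwise. Each of the $m-n+1$ non-tree edges creates a unique fundamental cycle with $T$, a directed cycle $\overrightarrow{C_j(T)}$ in $\overrightarrow{G_T}$. *)

theory Defs
  imports Complex_Main "Jordan_Normal_Form.Char_Poly"
begin

definition simple_graph :: "nat \<Rightarrow> (nat \<Rightarrow> nat \<Rightarrow> bool) \<Rightarrow> bool" where
  "simple_graph n E \<longleftrightarrow> (\<forall>u v. E u v \<longrightarrow> u < n \<and> v < n \<and> u \<noteq> v \<and> E v u)"

definition is_path :: "(nat \<Rightarrow> nat \<Rightarrow> bool) \<Rightarrow> nat list \<Rightarrow> nat \<Rightarrow> nat \<Rightarrow> bool" where
  "is_path R p u v \<longleftrightarrow> p \<noteq> [] \<and> hd p = u \<and> last p = v \<and> distinct p \<and>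
     (\<forall>i. Suc i < length p \<longrightarrow> R (p ! i) (p ! Suc i))"

definition connected_graph :: "nat \<Rightarrow> (nat \<Rightarrow> nat \<Rightarrow> bool) \<Rightarrow> bool" where
  "connected_graph n E \<longleftrightarrow> (\<forall>u<n. \<forall>v<n. \<exists>p. is_path E p u v)"

definition has_cycle :: "(nat \<Rightarrow> nat \<Rightarrow> bool) \<Rightarrow> bool" where
  "has_cycle R \<longleftrightarrow> (\<exists>p. length p \<ge> 3 \<and> is_path R p (hd p) (last p) \<and> R (last p) (hd p))"

definition spanning_tree :: "nat \<Rightarrow> (nat \<Rightarrow> nat \<Rightarrow> bool) \<Rightarrow> (nat \<Rightarrow> nat \<Rightarrow> bool) \<Rightarrow> bool" where
  "spanning_tree n E T \<longleftrightarrow> simple_graph n T \<and> (\<forall>u v. T u v \<longrightarrow> E u v)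
     \<and> connected_graph n T \<and> \<not> has_cycle T"

definition tree_le :: "(nat \<Rightarrow> nat \<Rightarrow> bool) \<Rightarrow> nat \<Rightarrow> nat \<Rightarrow> nat \<Rightarrow> bool" where
  "tree_le T r x y \<longleftrightarrow> (\<exists>p. is_path T p r y \<and> x \<in> set p)"

definition normal_spanning_tree ::
  "nat \<Rightarrow> (nat \<Rightarrow> nat \<Rightarrow> bool) \<Rightarrow> (nat \<Rightarrow> nat \<Rightarrow> bool) \<Rightarrow> nat \<Rightarrow> bool" where
  "normal_spanning_tree n E T r \<longleftrightarrow> spanning_tree n E T \<and> r < n \<and>
     (\<forall>u v. E u v \<longrightarrow> tree_le T r u v \<or> tree_le T r v u)"

text \<open>phi s t is the gain of the oriented edge from s to t.\<close>
definition T_gain :: "nat \<Rightarrow> (nat \<Rightarrow> nat \<Rightarrow> bool) \<Rightarrow> (nat \<Rightarrow> nat \<Rightarrow> complex) \<Rightarrow> bool" where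
  "T_gain n E phi \<longleftrightarrow> (\<forall>s t. E s t \<longrightarrow> cmod (phi s t) = 1 \<and> phi t s = inverse (phi s t))"

definition walk_gain :: "(nat \<Rightarrow> nat \<Rightarrow> complex) \<Rightarrow> nat list \<Rightarrow> complex" where
  "walk_gain phi p = (\<Prod>i<length p - 1. phi (p ! i) (p ! Suc i))"

definition gain_adj :: "nat \<Rightarrow> (nat \<Rightarrow> nat \<Rightarrow> bool) \<Rightarrow> (nat \<Rightarrow> nat \<Rightarrow> complex) \<Rightarrow> complex mat" where
  "gain_adj n E phi = mat n n (\<lambda>(s, t). if E s t then phi s t else 0)"

definition cospectral :: "complex mat \<Rightarrow> complex mat \<Rightarrow> bool" where
  "cospectral A B \<longleftrightarrow> (\<forall>z. order z (char_poly A) = order z (char_poly B))"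

end

theory Submission
  imports Defs
begin

text \<open>
  Let P x be the tree path from the root to x and d x = walk_gain phi2 (P x) / walk_gain phi1 (P x).
  Along every tree edge s t, d switches phi1 into phi2: phi2 s t * d s = phi1 s t * d t.
  Normality means that every non-tree edge joins a vertex s to a descendant t, so its fundamental
  cycle is the tree path from s to t closed by that edge; telescoping along the tree path and
  comparing the two cycle gains gives the switching identity on the closing edge too.
  Hence A(phi1) = D A(phi2) D^-1 with D = diag d, and similar matrices have the same
  characteristic polynomial.
\<close>

lemma is_path_iff_successively:
  "is_path R p u v \<longleftrightarrow> p \<noteq> [] \<and> hd p = u \<and> last p = v \<and> distinct p \<and> successively R p"
  unfolding is_path_def successively_conv_nth by blast

lemma is_path_prefix: "is_path R (xs @ v # ys) u w \<Longrightarrow> is_path R (xs @ [v]) u v"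
  by (auto simp: is_path_iff_successively successively_append_iff hd_append split: if_splits)

lemma is_path_suffix: "is_path R (xs @ v # ys) u w \<Longrightarrow> is_path R (v # ys) v w"
  by (auto simp: is_path_iff_successively successively_append_iff)

lemma is_path_snoc: "is_path R p u v \<Longrightarrow> R v w \<Longrightarrow> w \<notin> set p \<Longrightarrow> is_path R (p @ [w]) u w"
  by (auto simp: is_path_iff_successively successively_append_iff)

lemma has_cycleI:
  "length c \<ge> 3 \<Longrightarrow> distinct c \<Longrightarrow> successively R c \<Longrightarrow> R (last c) (hd c) \<Longrightarrow> has_cycle R"
  unfolding has_cycle_def is_path_iff_successively by force

lemma diverging_paths_has_cycle:
  assumes sym: "\<And>x y. R x y \<Longrightarrow> R y x"
    and p: "is_path R (u # a # p) u v" and q: "is_path R (u # b # q) u v" and "a \<noteq> b"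
  shows "has_cycle R"
proof -
  have "last (a # p) = v" "last (b # q) = v"
    using p q by (auto simp: is_path_iff_successively)
  then have "v \<in> set (a # p)" "v \<in> set (b # q)"
    by (metis last_in_set list.distinct(1))+
  then obtain p1 w p2 where p_split: "a # p = p1 @ w # p2" and "w \<in> set (b # q)"
      and p1_disj: "\<forall>y \<in> set p1. y \<notin> set (b # q)"
    using split_list_first_prop[of "a # p" "\<lambda>y. y \<in> set (b # q)"] by blast
  then obtain q1 q2 where q_split: "b # q = q1 @ w # q2"
    by (meson split_list)
  have "hd (q1 @ [w]) = b"
    using q_split by (cases q1) auto
  \<comment> \<open>the cycle runs from u along p to its first common vertex w with q, then back along q\<close>
  let ?c = "(u # p1) @ w # rev q1"
  show ?thesis
  proof (rule has_cycleI)
    show "length ?c \<ge> 3"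
      using p_split q_split \<open>a \<noteq> b\<close> by (cases p1; cases q1) auto
    have "distinct (u # p1 @ w # p2)" "distinct (u # q1 @ w # q2)"
      using p q unfolding p_split q_split by (simp_all add: is_path_iff_successively)
    then show "distinct ?c"
      using p1_disj unfolding q_split by auto
    have "successively R (((u # p1) @ [w]) @ p2)"
      using p unfolding p_split by (simp add: is_path_iff_successively)
    moreover have "successively R ((q1 @ [w]) @ q2)"
      using q unfolding q_split by (simp add: is_path_iff_successively successively_Cons)
    then have "successively R (rev (q1 @ [w]))"
      unfolding successively_rev successively_append_iff[of _ _ q2]
      using sym by (blast intro: successively_mono)
    ultimately have "successively R ((u # p1) @ [w])" "successively R (w # rev q1)"
      unfolding successively_append_iff[of _ _ p2] by simp_all
    then show "successively R ?c"
      unfolding successively_append_iff by simp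
    have "last ?c = b"
      using \<open>hd (q1 @ [w]) = b\<close> by (cases q1) (simp_all add: last_rev)
    then show "R (last ?c) (hd ?c)"
      using q sym by (simp add: is_path_iff_successively)
  qed
qed

lemma is_path_Cons_eq_Nil_iff: "is_path R (u # p) u v \<Longrightarrow> p = [] \<longleftrightarrow> v = u"
proof -
  assume "is_path R (u # p) u v"
  then have "v = last (u # p)" "u \<notin> set p"
    by (simp_all add: is_path_iff_successively)
  then show ?thesis
    by (metis last_ConsL last_ConsR last_in_set)
qed

lemma is_path_tl: "is_path R (u # a # p) u v \<Longrightarrow> is_path R (a # p) a v"
  by (simp add: is_path_iff_successively)

lemma acyclic_path_unique:
  assumes sym: "\<And>x y. R x y \<Longrightarrow> R y x" and acyclic: "\<not> has_cycle R"
  shows "is_path R p u v \<Longrightarrow> is_path R q u v \<Longrightarrow> p = q"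
proof (induction p arbitrary: u q)
  case Nil
  then show ?case by (simp add: is_path_def)
next
  case (Cons x p)
  then obtain q' where q: "q = u # q'" and "x = u"
    by (cases q) (auto simp: is_path_iff_successively)
  note paths = Cons.prems[unfolded \<open>x = u\<close> q]
  show ?case
  proof (cases "v = u")
    case True
    then show ?thesis
      using is_path_Cons_eq_Nil_iff[OF paths(1)] is_path_Cons_eq_Nil_iff[OF paths(2)]
        q \<open>x = u\<close> by simp
  next
    case False
    then obtain a p' b q'' where "p = a # p'" "q' = b # q''"
      using paths is_path_Cons_eq_Nil_iff by (metis list.exhaust)
    moreover from this have "a = b"
      using diverging_paths_has_cycle[of R, OF sym] paths acyclic by blast
    ultimately have "is_path R p a v" "is_path R q' a v"
      using paths by (auto intro: is_path_tl)
    then show ?thesis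
      using Cons.IH q \<open>x = u\<close> by simp
  qed
qed

lemma tree_le_path:
  assumes "tree_le T r s t"
  obtains p where "is_path T p s t"
proof -
  obtain q where "is_path T q r t" "s \<in> set q"
    using assms unfolding tree_le_def by blast
  then show ?thesis
    using that is_path_suffix by (metis split_list)
qed

locale rooted_tree =
  fixes n :: nat and T :: "nat \<Rightarrow> nat \<Rightarrow> bool" and r :: nat
  assumes simple: "simple_graph n T" and connected: "connected_graph n T"
    and acyclic: "\<not> has_cycle T" and root: "r < n"
begin

lemma sym: "T x y \<Longrightarrow> T y x"
  using simple unfolding simple_graph_def by blast

lemma path_unique: "is_path T p u v \<Longrightarrow> is_path T q u v \<Longrightarrow> p = q"
  using acyclic_path_unique[of T, OF sym acyclic] .

definition root_path :: "nat \<Rightarrow> nat list" where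
  "root_path x = (THE p. is_path T p r x)"

lemma root_path: "x < n \<Longrightarrow> is_path T (root_path x) r x"
  unfolding root_path_def
  using connected root path_unique unfolding connected_graph_def by (metis theI)

lemma root_path_eqI: "x < n \<Longrightarrow> is_path T p r x \<Longrightarrow> root_path x = p"
  using root_path path_unique by blast

lemma root_path_tree_edge:
  assumes "T u v"
  shows "root_path v = root_path u @ [v] \<or> root_path u = root_path v @ [u]"
proof -
  have "u < n" "v < n" "u \<noteq> v"
    using assms simple unfolding simple_graph_def by auto
  show ?thesis
  proof (cases "v \<in> set (root_path u)")
    case False
    then show ?thesis
      using is_path_snoc[OF root_path assms] root_path_eqI \<open>u < n\<close> \<open>v < n\<close> by blast
  next
    case True
    then obtain xs ys where split: "root_path u = xs @ v # ys"
      by (meson split_list)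
    then have "root_path v = xs @ [v]"
      using root_path[OF \<open>u < n\<close>] is_path_prefix root_path_eqI[OF \<open>v < n\<close>]
      unfolding split by blast
    moreover have "is_path T (v # ys) v u"
      using root_path[OF \<open>u < n\<close>] is_path_suffix unfolding split by blast
    moreover have "is_path T [v, u] v u"
      using sym[OF assms] \<open>u \<noteq> v\<close> by (simp add: is_path_iff_successively)
    ultimately show ?thesis
      using split path_unique by fastforce
  qed
qed

end

lemma walk_gain_snoc: "p \<noteq> [] \<Longrightarrow> walk_gain phi (p @ [x]) = walk_gain phi p * phi (last p) x"
  by (induction p rule: rev_induct)
    (auto simp: walk_gain_def nth_append lessThan_Suc last_conv_nth intro!: prod.cong)

lemma T_gain_nonzero: "T_gain n E phi \<Longrightarrow> E s t \<Longrightarrow> phi s t \<noteq> 0"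
  unfolding T_gain_def by force

lemma T_gain_mono: "T_gain n E phi \<Longrightarrow> (\<And>s t. T s t \<Longrightarrow> E s t) \<Longrightarrow> T_gain n T phi"
  unfolding T_gain_def by blast

lemma walk_gain_nonzero:
  assumes "T_gain n E phi" "successively E p"
  shows "walk_gain phi p \<noteq> 0"
  using assms(2)
proof (induction p rule: rev_induct)
  case (snoc x p)
  show ?case
  proof (cases "p = []")
    case False
    then show ?thesis
      using snoc T_gain_nonzero[OF assms(1)] by (simp add: walk_gain_snoc successively_append_iff)
  qed (simp add: walk_gain_def)
qed (simp add: walk_gain_def)

lemma switching_reverse_edge:
  assumes "T_gain n E phi1" "T_gain n E phi2" "E s t"
    and "phi2 s t * d s = phi1 s t * d t"
  shows "phi2 t s * d t = phi1 t s * d s"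
proof -
  have inverses: "phi1 t s = inverse (phi1 s t)" "phi2 t s = inverse (phi2 s t)"
    using assms(1-3) unfolding T_gain_def by auto
  show ?thesis
    unfolding inverses using assms(4) T_gain_nonzero[OF assms(1,3)] T_gain_nonzero[OF assms(2,3)]
    by (simp add: field_simps)
qed

lemma walk_gain_switching:
  assumes "\<And>s t. R s t \<Longrightarrow> phi2 s t * d s = phi1 s t * d t" "successively R p" "p \<noteq> []"
  shows "walk_gain phi2 p * d (hd p) = walk_gain phi1 p * d (last p)"
  using assms(2,3)
proof (induction p rule: rev_induct)
  case (snoc x p)
  show ?case
  proof (cases "p = []")
    case False
    then have "walk_gain phi2 p * d (hd p) = walk_gain phi1 p * d (last p)"
      and "phi2 (last p) x * d (last p) = phi1 (last p) x * d x"
      using snoc assms(1) by (simp_all add: successively_append_iff)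
    then show ?thesis
      using False by (simp add: walk_gain_snoc) (metis mult.assoc mult.commute)
  qed (simp add: walk_gain_def)
qed simp

lemma closing_edge_switching:
  assumes "p \<noteq> []" "walk_gain phi1 p \<noteq> 0"
    and "walk_gain phi2 p * d (hd p) = walk_gain phi1 p * d (last p)"
    and "walk_gain phi1 (p @ [hd p]) = walk_gain phi2 (p @ [hd p])"
  shows "phi2 (last p) (hd p) * d (last p) = phi1 (last p) (hd p) * d (hd p)"
proof -
  let ?s = "hd p" and ?t = "last p"
  have "walk_gain phi1 p * (phi1 ?t ?s * d ?s) = (walk_gain phi2 p * d ?s) * phi2 ?t ?s"
    using assms(4) unfolding walk_gain_snoc[OF assms(1)] by (simp add: ac_simps)
  also have "\<dots> = walk_gain phi1 p * (phi2 ?t ?s * d ?t)"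
    unfolding assms(3) by (simp add: ac_simps)
  finally show ?thesis
    using assms(2) by simp
qed

context rooted_tree
begin

definition tree_switching :: "(nat \<Rightarrow> nat \<Rightarrow> complex) \<Rightarrow> (nat \<Rightarrow> nat \<Rightarrow> complex) \<Rightarrow> nat \<Rightarrow> complex"
  where "tree_switching phi1 phi2 x = walk_gain phi2 (root_path x) / walk_gain phi1 (root_path x)"

context
  fixes phi1 phi2 :: "nat \<Rightarrow> nat \<Rightarrow> complex"
  assumes gain1: "T_gain n T phi1" and gain2: "T_gain n T phi2"
begin

lemma tree_switching_nonzero: "x < n \<Longrightarrow> tree_switching phi1 phi2 x \<noteq> 0"
  using root_path walk_gain_nonzero[OF gain1] walk_gain_nonzero[OF gain2]
  unfolding tree_switching_def is_path_iff_successively by simp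

lemma tree_switching_tree_edge:
  assumes "T u v"
  shows "phi2 u v * tree_switching phi1 phi2 u = phi1 u v * tree_switching phi1 phi2 v"
proof -
  have away_from_root: "phi2 x y * tree_switching phi1 phi2 x = phi1 x y * tree_switching phi1 phi2 y"
    if "T x y" "root_path y = root_path x @ [y]" for x y
  proof -
    have "x < n"
      using simple \<open>T x y\<close> unfolding simple_graph_def by blast
    then have "root_path x \<noteq> []" "last (root_path x) = x"
      and "walk_gain phi1 (root_path x) \<noteq> 0"
      using root_path walk_gain_nonzero[OF gain1] by (auto simp: is_path_iff_successively)
    then show ?thesis
      using that T_gain_nonzero[OF gain1 \<open>T x y\<close>]
      by (simp add: tree_switching_def walk_gain_snoc field_simps)
  qed
  show ?thesis
    using root_path_tree_edge[OF assms] away_from_root[OF assms]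
      switching_reverse_edge[OF gain1 gain2 sym[OF assms] away_from_root[OF sym[OF assms]]]
    by blast
qed

lemma tree_switching_fundamental_cycle:
  assumes "is_path T p s t" "walk_gain phi1 (p @ [s]) = walk_gain phi2 (p @ [s])"
  shows "phi2 t s * tree_switching phi1 phi2 t = phi1 t s * tree_switching phi1 phi2 s"
proof -
  have p: "p \<noteq> []" "hd p = s" "last p = t" "successively T p"
    using assms(1) by (simp_all add: is_path_iff_successively)
  show ?thesis
    using closing_edge_switching[OF p(1) walk_gain_nonzero[OF gain1 p(4)]
        walk_gain_switching[OF tree_switching_tree_edge p(4,1)]] assms(2)
    unfolding p(2,3) by simp
qed

end

end

lemma gain_adj_switching_similar:
  assumes nonzero: "\<And>s. s < n \<Longrightarrow> d s \<noteq> 0"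
    and switching: "\<And>s t. E s t \<Longrightarrow> phi2 s t * d s = phi1 s t * d t"
  shows "similar_mat (gain_adj n E phi1) (gain_adj n E phi2)"
proof (rule similar_matI[where P = "mat_diag n d" and Q = "mat_diag n (\<lambda>s. inverse (d s))"])
  show "{gain_adj n E phi1, gain_adj n E phi2, mat_diag n d, mat_diag n (\<lambda>s. inverse (d s))}
      \<subseteq> carrier_mat n n"
    by (simp add: gain_adj_def)
  show "mat_diag n d * mat_diag n (\<lambda>s. inverse (d s)) = 1\<^sub>m n"
    "mat_diag n (\<lambda>s. inverse (d s)) * mat_diag n d = 1\<^sub>m n"
    unfolding mat_diag_diag by (auto intro!: eq_matI simp: mat_diag_def nonzero)
  have A2: "gain_adj n E phi2 \<in> carrier_mat n n"
    by (simp add: gain_adj_def)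
  have "phi1 s t = d s * phi2 s t * inverse (d t)" if "E s t" "t < n" for s t
    using switching[OF \<open>E s t\<close>] nonzero[OF \<open>t < n\<close>] by (simp add: field_simps)
  then have "gain_adj n E phi1 = mat n n (\<lambda>(s, t). d s * gain_adj n E phi2 $$ (s, t) * inverse (d t))"
    by (auto intro!: eq_matI simp: gain_adj_def)
  also have "\<dots> = mat_diag n d * gain_adj n E phi2 * mat_diag n (\<lambda>s. inverse (d s))"
    by (subst mat_diag_mult_left[OF A2], subst mat_diag_mult_right[of _ n], auto)
  finally show "gain_adj n E phi1 = mat_diag n d * gain_adj n E phi2 * mat_diag n (\<lambda>s. inverse (d s))" .
qed

lemma similar_mat_cospectral: "similar_mat A B \<Longrightarrow> cospectral A B"
  unfolding cospectral_def by (simp add: char_poly_similar)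

theorem theorem3p2:
  fixes n :: nat and E T :: "nat \<Rightarrow> nat \<Rightarrow> bool" and r :: nat
    and phi1 phi2 :: "nat \<Rightarrow> nat \<Rightarrow> complex"
  assumes "simple_graph n E" and "connected_graph n E"
    and "T_gain n E phi1" and "T_gain n E phi2"
    and "normal_spanning_tree n E T r"
    and "\<And>s t p. E s t \<Longrightarrow> \<not> T s t \<Longrightarrow> tree_le T r s t \<Longrightarrow> is_path T p s t \<Longrightarrow>
           walk_gain phi1 (p @ [s]) = walk_gain phi2 (p @ [s])"
  shows "cospectral (gain_adj n E phi1) (gain_adj n E phi2)"
proof -
  have tree: "spanning_tree n E T" "r < n"
    and normal: "\<And>u v. E u v \<Longrightarrow> tree_le T r u v \<or> tree_le T r v u"
    using assms(5) unfolding normal_spanning_tree_def by auto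
  then interpret rooted_tree n T r
    by unfold_locales (auto simp: spanning_tree_def)
  have "\<And>s t. T s t \<Longrightarrow> E s t"
    using tree unfolding spanning_tree_def by blast
  note gains = T_gain_mono[OF assms(3) this] T_gain_mono[OF assms(4) this]
  define d where "d = tree_switching phi1 phi2"
  have cotree_edge: "phi2 t s * d t = phi1 t s * d s"
    if "E s t" "\<not> T s t" "tree_le T r s t" for s t
    using tree_le_path[OF that(3)] tree_switching_fundamental_cycle[OF gains] assms(6)[OF that]
    unfolding d_def by metis
  have "phi2 s t * d s = phi1 s t * d t" if "E s t" for s t
  proof (cases "T s t")
    case True
    show ?thesis
      unfolding d_def by (rule tree_switching_tree_edge[OF gains True])
  next
    case False
    have "E t s"
      using assms(1) \<open>E s t\<close> unfolding simple_graph_def by blast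
    then show ?thesis
      using normal[OF \<open>E s t\<close>] cotree_edge[OF \<open>E s t\<close> False] cotree_edge[OF \<open>E t s\<close>]
        switching_reverse_edge[OF assms(3,4) \<open>E t s\<close>] False sym by blast
  qed
  then show ?thesis
    using gain_adj_switching_similar similar_mat_cospectral tree_switching_nonzero[OF gains]
    unfolding d_def by blast
qed

end
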